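(* Let $\theta_0\in\mathbb{R}^d$, source task vectors $\tau_1,\dots,\tau_T\in\mathbb{R}^d$ and a target task vector $\tau_{\mathrm{tar}}\in\mathbb{R}^d$ with $\|\tau_i\|^2\le C$ for all $i$ and $\|\tau_{\mathrm{tar}}\|^2\le C$, where $C>0$. Let $\theta_{\mathrm{tar}}=\theta_0+\tau_{\mathrm{tar}}$ and let $\mathcal{L}_{\mathrm{tar}}:\mathbb{R}^d\to\mathbb{R}$ be differentiable with $\nabla\mathcal{L}_{\mathrm{tar}}(\theta_{\mathrm{tar}})=0$, and suppose there is $L_{\mathrm{tar}}\ge 0$ such that for all $\theta$ with $\|\theta-\theta_{\mathrm{tar}}\|\le 2\sqrt{C}$, $\mathcal{L}_{\mathrm{tar}}(\theta)-\mathcal{L}_{\mathrm{tar}}(\theta_{\mathrm{tar}})\le\langle\theta-\theta_{\mathrm{tar}},\nabla\mathcal{L}_{\mathrm{tar}}(\theta_{\mathrm{tar}})\rangle+\frac{L_{\mathrm{tar}}}{2}\|\theta-\theta_{\mathrm{tar}}\|^2$. Assume $\langle\tau_{\mathrm{tar}},\tau_i\rangle\ge 0$ for all $i\in[T]$; let $i^\star\in\arg\max_{i\in[T]}\langle\tau_{\mathrm{tar}},\tau_i\rangle$ and suppose $\langle\tau_{\mathrm{tar}},\tau_{i^\star}\rangle\ge\gamma C$ for some $0<\gamma\le 1$. Let $\mathbf{W}_e\in\mathbb{R}^{T\times M}$ have every column in $\Delta^{T-1}$, let $B_m=\sum_{j=1}^T\mathbf{W}_e[j,m]\tau_j$, and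 suppose there is $m^\star\in[M]$ with $\mathbf{W}_e[i^\star,m^\star]\ge\rho$ for some $\rho\in(0,1]$. Then there exists $\alpha\in\Delta^{M-1}$ such that $\theta^M_{\mathrm{Add}}=\theta_0+\sum_{m=1}^M\alpha_mB_m$ satisfies $$\mathcal{L}_{\mathrm{tar}}(\theta^M_{\mathrm{Add}})\le\mathcal{L}_{\mathrm{tar}}(\theta_{\mathrm{tar}})+L_{\mathrm{tar}}C(1-\rho\gamma).$$
   Context: Norms and inner products are Euclidean. $\Delta^{K-1}=\{x\in\mathbb{R}^K: x\ge 0,\ \sum_k x_k=1\}$. The vectors $B_m$ are the basis vectors (convex combinations of task vectors) produced by a softmax-activated encoder with weight matrix $\mathbf{W}_e$. *)

theory Defs
  imports "HOL-Analysis.Analysis"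
begin

text \<open>Probability simplex Delta^{K-1}, with coordinates indexed by 0..K-1.\<close>
definition prob_simplex :: "nat \<Rightarrow> (nat \<Rightarrow> real) set" where
  "prob_simplex K = {x. (\<forall>k<K. 0 \<le> x k) \<and> (\<Sum>k<K. x k) = 1}"

end

theory Submission
  imports Defs
begin

text \<open>It suffices to put all weight on the basis vector \<open>B\<^sub>m\<^sub>\<star>\<close>. As a convex combination
  of task vectors of norm at most \<open>\<surd>C\<close>, it has norm at most \<open>\<surd>C\<close>; since all inner products
  \<open>\<langle>\<tau>\<^sub>t\<^sub>a\<^sub>r, \<tau>\<^sub>j\<rangle>\<close> are nonnegative, \<open>\<langle>\<tau>\<^sub>t\<^sub>a\<^sub>r, B\<^sub>m\<^sub>\<star>\<rangle> \<ge> \<rho> \<langle>\<tau>\<^sub>t\<^sub>a\<^sub>r, \<tau>\<^sub>i\<^sub>\<star>\<rangle> \<ge> \<rho>\<gamma>C\<close>.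
  Expanding the square gives \<open>\<parallel>B\<^sub>m\<^sub>\<star> - \<tau>\<^sub>t\<^sub>a\<^sub>r\<parallel>\<^sup>2 \<le> 2C(1 - \<rho>\<gamma>)\<close>, and the quadratic upper
  bound at the stationary point \<open>\<theta>\<^sub>t\<^sub>a\<^sub>r\<close> turns this into the loss bound.\<close>

lemma vertex_in_prob_simplex:
  assumes "m < M"
  shows "(\<lambda>k. if k = m then 1 else 0) \<in> prob_simplex M"
  using assms by (auto simp: prob_simplex_def)

lemma sum_vertex_scaleR:
  fixes f :: "nat \<Rightarrow> 'a::real_vector"
  assumes "m < M"
  shows "(\<Sum>k<M. (if k = m then 1 else 0) *\<^sub>R f k) = f m"
proof -
  have "(\<Sum>k<M. (if k = m then 1 else 0) *\<^sub>R f k) = (\<Sum>k<M. if k = m then f k else 0)"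
    by (intro sum.cong) auto
  then show ?thesis
    using assms by simp
qed

lemma norm_convex_combination_le:
  fixes v :: "nat \<Rightarrow> 'a::real_normed_vector"
  assumes w: "w \<in> prob_simplex T" and bound: "\<forall>j<T. norm (v j) \<le> r"
  shows "norm (\<Sum>j<T. w j *\<^sub>R v j) \<le> r"
proof -
  have w_nonneg: "\<forall>j<T. 0 \<le> w j" and w_sum: "(\<Sum>j<T. w j) = 1"
    using w by (auto simp: prob_simplex_def)
  have "norm (\<Sum>j<T. w j *\<^sub>R v j) \<le> (\<Sum>j<T. norm (w j *\<^sub>R v j))"
    by (rule norm_sum)
  also have "\<dots> = (\<Sum>j<T. w j * norm (v j))"
    using w_nonneg by (intro sum.cong) auto
  also have "\<dots> \<le> (\<Sum>j<T. w j * r)"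
    using w_nonneg bound by (intro sum_mono mult_left_mono) auto
  also have "\<dots> = r"
    using w_sum by (simp add: sum_distrib_right[symmetric])
  finally show ?thesis .
qed

lemma inner_convex_combination_ge:
  fixes u :: "'a::real_inner"
  assumes w: "w \<in> prob_simplex T" and i: "i < T" and nonneg: "\<forall>j<T. 0 \<le> u \<bullet> v j"
  shows "w i * (u \<bullet> v i) \<le> u \<bullet> (\<Sum>j<T. w j *\<^sub>R v j)"
proof -
  have w_nonneg: "\<forall>j<T. 0 \<le> w j"
    using w by (auto simp: prob_simplex_def)
  have "u \<bullet> (\<Sum>j<T. w j *\<^sub>R v j) = (\<Sum>j<T. w j * (u \<bullet> v j))"
    by (simp add: inner_sum_right)
  also have "\<dots> = w i * (u \<bullet> v i) + (\<Sum>j\<in>{..<T} - {i}. w j * (u \<bullet> v j))"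
    using i by (simp add: sum.remove)
  also have "\<dots> \<ge> w i * (u \<bullet> v i)"
    using w_nonneg nonneg by (auto intro!: sum_nonneg)
  finally show ?thesis .
qed

lemma norm_diff_square_le_of_inner_ge:
  fixes x y :: "'a::real_inner"
  assumes "(norm x)\<^sup>2 \<le> C" "(norm y)\<^sup>2 \<le> C" "c * C \<le> x \<bullet> y"
  shows "(norm (x - y))\<^sup>2 \<le> 2 * C * (1 - c)"
  using assms dot_norm_neg[of x y] by (simp add: algebra_simps)

lemma quadratic_upper_bound_at_stationary_point:
  fixes \<L> :: "'a::real_inner \<Rightarrow> real"
  assumes smooth: "\<forall>\<theta>. norm (\<theta> - \<theta>opt) \<le> R \<longrightarrow>
        \<L> \<theta> - \<L> \<theta>opt \<le> (\<theta> - \<theta>opt) \<bullet> g + L / 2 * (norm (\<theta> - \<theta>opt))\<^sup>2"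
    and "g = 0" and "0 \<le> L"
    and "norm (\<theta> - \<theta>opt) \<le> R" and "(norm (\<theta> - \<theta>opt))\<^sup>2 \<le> D"
  shows "\<L> \<theta> \<le> \<L> \<theta>opt + L / 2 * D"
proof -
  have "\<L> \<theta> - \<L> \<theta>opt \<le> L / 2 * (norm (\<theta> - \<theta>opt))\<^sup>2"
    using smooth assms(2,4) by simp
  also have "\<dots> \<le> L / 2 * D"
    using assms(3,5) by (intro mult_left_mono) auto
  finally show ?thesis by simp
qed

theorem mainTheorem6:
  fixes \<theta>0 \<tau>tar :: "'a::euclidean_space"
    and \<tau> :: "nat \<Rightarrow> 'a"
    and T M :: nat
    and C Ltar \<gamma> \<rho> :: real
    and \<L> :: "'a \<Rightarrow> real"
    and grad :: "'a \<Rightarrow> 'a"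
    and W :: "nat \<Rightarrow> nat \<Rightarrow> real"
    and istar mstar :: nat
  assumes Cpos: "C > 0"
    and tau_bd: "\<forall>i<T. (norm (\<tau> i))\<^sup>2 \<le> C"
    and tar_bd: "(norm \<tau>tar)\<^sup>2 \<le> C"
    and grad: "\<forall>\<theta>. (\<L> has_derivative (\<lambda>h. grad \<theta> \<bullet> h)) (at \<theta>)"
    and grad0: "grad (\<theta>0 + \<tau>tar) = 0"
    and Ltar: "Ltar \<ge> 0"
    and smooth: "\<forall>\<theta>. norm (\<theta> - (\<theta>0 + \<tau>tar)) \<le> 2 * sqrt C \<longrightarrow>
        \<L> \<theta> - \<L> (\<theta>0 + \<tau>tar) \<le> (\<theta> - (\<theta>0 + \<tau>tar)) \<bullet> grad (\<theta>0 + \<tau>tar)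
          + Ltar / 2 * (norm (\<theta> - (\<theta>0 + \<tau>tar)))\<^sup>2"
    and nonneg: "\<forall>i<T. \<tau>tar \<bullet> \<tau> i \<ge> 0"
    and istar: "istar < T" "\<forall>i<T. \<tau>tar \<bullet> \<tau> i \<le> \<tau>tar \<bullet> \<tau> istar"
    and gamma: "0 < \<gamma>" "\<gamma> \<le> 1" "\<tau>tar \<bullet> \<tau> istar \<ge> \<gamma> * C"
    and W: "\<forall>m<M. (\<lambda>j. W j m) \<in> prob_simplex T"
    and mstar: "mstar < M" "W istar mstar \<ge> \<rho>"
    and rho: "0 < \<rho>" "\<rho> \<le> 1"
  shows "\<exists>\<alpha> \<in> prob_simplex M.
     \<L> (\<theta>0 + (\<Sum>m<M. \<alpha> m *\<^sub>R (\<Sum>j<T. W j m *\<^sub>R \<tau> j)))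
       \<le> \<L> (\<theta>0 + \<tau>tar) + Ltar * C * (1 - \<rho> * \<gamma>)"
proof -
  define B where "B = (\<Sum>j<T. W j mstar *\<^sub>R \<tau> j)"
  have W_mstar: "(\<lambda>j. W j mstar) \<in> prob_simplex T"
    using W mstar(1) by simp
  have norm_B: "norm B \<le> sqrt C"
    unfolding B_def using W_mstar tau_bd
    by (intro norm_convex_combination_le) (auto intro: real_le_rsqrt)
  have norm_B_sq: "(norm B)\<^sup>2 \<le> C"
    using norm_B Cpos by (metis norm_ge_zero power_mono real_sqrt_pow2 less_imp_le)
  have "\<rho> * \<gamma> * C \<le> W istar mstar * (\<tau>tar \<bullet> \<tau> istar)"
    using mstar(2) gamma rho Cpos by (simp add: mult.assoc mult_mono)
  also have "\<dots> \<le> \<tau>tar \<bullet> B"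
    unfolding B_def using W_mstar istar(1) nonneg by (rule inner_convex_combination_ge)
  finally have "\<rho> * \<gamma> * C \<le> B \<bullet> \<tau>tar"
    by (simp only: inner_commute)
  then have "(norm (B - \<tau>tar))\<^sup>2 \<le> 2 * C * (1 - \<rho> * \<gamma>)"
    by (rule norm_diff_square_le_of_inner_ge[OF norm_B_sq tar_bd])
  then have dist_sq: "(norm (\<theta>0 + B - (\<theta>0 + \<tau>tar)))\<^sup>2 \<le> 2 * C * (1 - \<rho> * \<gamma>)"
    by simp
  have "norm (B - \<tau>tar) \<le> 2 * sqrt C"
    using norm_triangle_ineq4[of B \<tau>tar] norm_B real_le_rsqrt[OF tar_bd] by linarith
  then have dist: "norm (\<theta>0 + B - (\<theta>0 + \<tau>tar)) \<le> 2 * sqrt C"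
    by simp
  have "\<L> (\<theta>0 + B) \<le> \<L> (\<theta>0 + \<tau>tar) + Ltar / 2 * (2 * C * (1 - \<rho> * \<gamma>))"
    by (rule quadratic_upper_bound_at_stationary_point[OF smooth grad0 Ltar dist dist_sq])
  also have "\<dots> = \<L> (\<theta>0 + \<tau>tar) + Ltar * C * (1 - \<rho> * \<gamma>)"
    by simp
  moreover have "(\<Sum>m<M. (if m = mstar then 1 else 0) *\<^sub>R (\<Sum>j<T. W j m *\<^sub>R \<tau> j)) = B"
    unfolding B_def by (rule sum_vertex_scaleR[OF mstar(1)])
  ultimately show ?thesis
    using vertex_in_prob_simplex[OF mstar(1)] by (intro bexI) simp_all
qed

end
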